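(* In the discrete torus model with frame group $\mathbb{Z}_4$ and the 2-dimensional calculus $\mathcal C=\{\bar1,\bar3\}$ (context), the torsion-free and cotorsion-free spin connections are exactly \[A_{\bar1}=(-\alpha-\tfrac{s_1}{2})e_1+(\beta-\tfrac{s_2}{2})e_2,\qquad A_{\bar3}=(\beta-\tfrac{s_1}{2})e_1+(\alpha-\tfrac{s_2}{2})e_2,\] for functions $\alpha,\beta$ such that $a=\alpha+\beta$, $b=\beta-\alpha$ satisfy $(R_1+R_2)a=0=(R_1+R_2)b$, where $s_1=\bar\partial^2\Theta_1$, $s_2=\bar\partial^1\Theta_2$. Their covariant derivative is \[\nabla e_1=(b-s_1)e_1\otimes e_1+a\,e_1\otimes e_2+(a-s_2)e_2\otimes e_1-b\,e_2\otimes e_2,\] \[\nabla e_2=-a\,e_1\otimes e_1+(b-s_1)e_1\otimes e_2+b\,e_2\otimes e_1+(a-s_2)e_2\otimes e_2,\] and such a connection is regular if and only if $s_1\,\bar\partial^2a-s_2\,\bar\partial^1b=0$.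
   Context: Discrete torus model: $\Sigma=\mathbb{Z}_2\times\mathbb{Z}_2$, $x\to y$ iff $y-x\in\{(1,0),(0,1)\}$; diagonal zweibein $e_{1,x,x+(1,0)}=\Theta_1(x)^{-1}$, $e_{2,x,x+(0,1)}=\Theta_2(x)^{-1}$, $\Theta_a$ nowhere-vanishing with $\Theta_1R_1\Theta_2=\Theta_2R_2\Theta_1$; $R_1f(x)=f(x+(1,0))$, $R_2f(x)=f(x+(0,1))$, $\bar\partial^a=R_a-\mathrm{id}$; $e_af=R_a(f)e_a$, $\mathrm{d}f=\sum_a(\bar\partial^af)\Theta_ae_a$; two-forms $e_1\wedge e_2=-e_2\wedge e_1$, $e_a\wedge e_a=0$; $\mathrm{d}e_1=(\bar\partial^1\Theta_2)e_1\wedge e_2$, $\mathrm{d}e_2=-(\bar\partial^2\Theta_1)e_1\wedge e_2$. Frame group $\mathbb{Z}_4$ acting by quarter rotations ($\bar1$: $e_1\mapsto e_2$, $e_2\mapsto-e_1$), calculus $\mathcal C=\{\bar1,\bar3\}$; $f^{\bar1}\triangleright e_1=e_2-e_1$, $f^{\bar1}\triangleright e_2=-e_1-e_2$, $f^{\bar3}\triangleright e_1=-e_1-e_2$, $f^{\bar3}\triangleright e_2=e_1-e_2$. Spin connection: 1-forms $A_{\bar1},A_{\bar3}$. Torsion-free: $\mathrm{d}e_a+\sum_iA_i\wedge(f^i\triangleright e_a)=0$; cotorsion-free: $\mathrm{d}e_a+(f^{\bar3}\triangleright e_a)\wedge A_{\bar1}+(f^{\bar1}\triangleright e_a)\wedge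 A_{\bar3}=0$; regular: $A_{\bar1}\wedge A_{\bar1}+A_{\bar3}\wedge A_{\bar3}=0$. Covariant derivative $\nabla(\sum\alpha^ae_a)=\sum\mathrm{d}\alpha^a\otimes e_a-\sum_{i,a}\alpha^aA_i\otimes f^i\triangleright e_a$. *)

theory Defs
  imports Main "HOL.Real"
begin

text \<open>Discrete torus Sigma = Z2 x Z2, points encoded as pairs of booleans
  (negation = adding 1 mod 2). Functions on Sigma are real valued.\<close>

type_synonym pt = "bool \<times> bool"
type_synonym fn = "pt \<Rightarrow> real"

datatype idx = I1 | I2

text \<open>Elements of the calculus C = {1bar, 3bar} of the frame group Z4.\<close>
datatype cal = C1 | C3

text \<open>One-forms  c_1 e_1 + c_2 e_2 (coefficients on the left),
  two-forms  c e_1 /\ e_2,  elements of Omega^1 (x) Omega^1  sum c_ab e_a (x) e_b.\<close>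
type_synonym oneform = "idx \<Rightarrow> fn"
type_synonym twoform = "fn"
type_synonym tensor = "idx \<Rightarrow> idx \<Rightarrow> fn"

definition R1 :: "fn \<Rightarrow> fn" where "R1 f = (\<lambda>(x, y). f (\<not> x, y))"
definition R2 :: "fn \<Rightarrow> fn" where "R2 f = (\<lambda>(x, y). f (x, \<not> y))"

definition Rsh :: "idx \<Rightarrow> fn \<Rightarrow> fn" where
  "Rsh a = (case a of I1 \<Rightarrow> R1 | I2 \<Rightarrow> R2)"

definition dbar :: "idx \<Rightarrow> fn \<Rightarrow> fn" where
  "dbar a f = (\<lambda>p. Rsh a f p - f p)"

definition theta :: "fn \<Rightarrow> fn \<Rightarrow> idx \<Rightarrow> fn" where
  "theta \<Theta>1 \<Theta>2 a = (case a of I1 \<Rightarrow> \<Theta>1 | I2 \<Rightarrow> \<Theta>2)"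

definition ebas :: "idx \<Rightarrow> oneform" where
  "ebas a = (\<lambda>b p. if b = a then 1 else 0)"

definition dfun :: "fn \<Rightarrow> fn \<Rightarrow> fn \<Rightarrow> oneform" where
  "dfun \<Theta>1 \<Theta>2 f = (\<lambda>a p. dbar a f p * theta \<Theta>1 \<Theta>2 a p)"

definition de :: "fn \<Rightarrow> fn \<Rightarrow> idx \<Rightarrow> twoform" where
  "de \<Theta>1 \<Theta>2 a = (case a of I1 \<Rightarrow> dbar I1 \<Theta>2 | I2 \<Rightarrow> (\<lambda>p. - dbar I2 \<Theta>1 p))"

text \<open>Wedge product, using e_a f = R_a(f) e_a, e_a/\e_a = 0, e_2/\e_1 = - e_1/\e_2.\<close>
definition wedge :: "oneform \<Rightarrow> oneform \<Rightarrow> twoform" where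
  "wedge P Q = (\<lambda>p. P I1 p * Rsh I1 (Q I2) p - P I2 p * Rsh I2 (Q I1) p)"

text \<open>Tensor product over the function algebra, using e_a f = R_a(f) e_a.\<close>
definition tens :: "oneform \<Rightarrow> oneform \<Rightarrow> tensor" where
  "tens P Q = (\<lambda>a b p. P a p * Rsh a (Q b) p)"

definition act :: "cal \<Rightarrow> idx \<Rightarrow> oneform" where
  "act i a = (case (i, a) of
      (C1, I1) \<Rightarrow> (\<lambda>b p. case b of I1 \<Rightarrow> -1 | I2 \<Rightarrow> 1)
    | (C1, I2) \<Rightarrow> (\<lambda>b p. case b of I1 \<Rightarrow> -1 | I2 \<Rightarrow> -1)
    | (C3, I1) \<Rightarrow> (\<lambda>b p. case b of I1 \<Rightarrow> -1 | I2 \<Rightarrow> -1)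
    | (C3, I2) \<Rightarrow> (\<lambda>b p. case b of I1 \<Rightarrow> 1 | I2 \<Rightarrow> -1))"

text \<open>A spin connection is a pair of one-forms A_1bar, A_3bar, i.e. A :: cal => oneform.\<close>

definition torsion_free :: "fn \<Rightarrow> fn \<Rightarrow> (cal \<Rightarrow> oneform) \<Rightarrow> bool" where
  "torsion_free \<Theta>1 \<Theta>2 A \<longleftrightarrow>
     (\<forall>a. (\<lambda>p. de \<Theta>1 \<Theta>2 a p + wedge (A C1) (act C1 a) p + wedge (A C3) (act C3 a) p)
          = (\<lambda>p. 0))"

definition cotorsion_free :: "fn \<Rightarrow> fn \<Rightarrow> (cal \<Rightarrow> oneform) \<Rightarrow> bool" where
  "cotorsion_free \<Theta>1 \<Theta>2 A \<longleftrightarrow>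
     (\<forall>a. (\<lambda>p. de \<Theta>1 \<Theta>2 a p + wedge (act C3 a) (A C1) p + wedge (act C1 a) (A C3) p)
          = (\<lambda>p. 0))"

definition regular :: "(cal \<Rightarrow> oneform) \<Rightarrow> bool" where
  "regular A \<longleftrightarrow> (\<lambda>p. wedge (A C1) (A C1) p + wedge (A C3) (A C3) p) = (\<lambda>p. 0)"

definition nabla :: "fn \<Rightarrow> fn \<Rightarrow> (cal \<Rightarrow> oneform) \<Rightarrow> oneform \<Rightarrow> tensor" where
  "nabla \<Theta>1 \<Theta>2 A \<alpha> = (\<lambda>b c p.
      (\<Sum>a\<in>{I1, I2}. tens (dfun \<Theta>1 \<Theta>2 (\<alpha> a)) (ebas a) b c p)
    - (\<Sum>i\<in>{C1, C3}. \<Sum>a\<in>{I1, I2}. tens (\<lambda>d q. \<alpha> a q * A i d q) (act i a) b c p))"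

definition s1 :: "fn \<Rightarrow> fn" where "s1 \<Theta>1 = dbar I2 \<Theta>1"
definition s2 :: "fn \<Rightarrow> fn" where "s2 \<Theta>2 = dbar I1 \<Theta>2"

definition spin_conn :: "fn \<Rightarrow> fn \<Rightarrow> fn \<Rightarrow> fn \<Rightarrow> cal \<Rightarrow> oneform" where
  "spin_conn \<Theta>1 \<Theta>2 \<alpha> \<beta> = (\<lambda>i. case i of
      C1 \<Rightarrow> (\<lambda>d p. case d of I1 \<Rightarrow> - \<alpha> p - s1 \<Theta>1 p / 2 | I2 \<Rightarrow> \<beta> p - s2 \<Theta>2 p / 2)
    | C3 \<Rightarrow> (\<lambda>d p. case d of I1 \<Rightarrow> \<beta> p - s1 \<Theta>1 p / 2 | I2 \<Rightarrow> \<alpha> p - s2 \<Theta>2 p / 2))"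

end

theory Submission
  imports Defs
begin

(* Torsion-freeness is a pair of pointwise linear equations in the four components of A,
   whose general solution is the two-parameter family spin_conn alpha beta.  For this family
   the shifts in the cotorsion equations act on s_1 = dbar^2 Theta_1 and s_2 = dbar^1 Theta_2
   only through R_2 s_1 = -s_1 and R_1 s_2 = -s_2 (R_a is an involution), and what remains is
   exactly (R_1 + R_2) a = 0 = (R_1 + R_2) b.  The frame has constant coefficients, so nabla e_c
   only sees A.  Finally (R_1 + R_2) a = (R_1 + R_2) b = 0 says that alpha and beta change sign
   between x + (1,0) and x + (0,1); with this A_1 /\ A_1 + A_3 /\ A_3 collapses to
   (s_1 dbar^2 a - s_2 dbar^1 b) / 2. *)

lemma all_idx_eq: "(\<forall>a. P a) \<longleftrightarrow> P I1 \<and> P I2"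
  by (auto intro: idx.induct)

lemma R1_apply [simp]: "R1 f (x, y) = f (\<not> x, y)"
  by (simp add: R1_def)

lemma R2_apply [simp]: "R2 f (x, y) = f (x, \<not> y)"
  by (simp add: R2_def)

lemma Rsh_simps [simp]: "Rsh I1 = R1" "Rsh I2 = R2"
  by (simp_all add: Rsh_def)

lemma Rsh_act [simp]: "Rsh b (act i a d) = act i a d"
  by (cases b; cases i; cases a; cases d) (auto simp: act_def fun_eq_iff)

lemma dbar_const [simp]: "dbar a (\<lambda>p. c) = (\<lambda>p. 0)"
  by (cases a) (auto simp: dbar_def fun_eq_iff)

lemma s1_flip_snd [simp]: "s1 \<Theta>1 (x, \<not> y) = - s1 \<Theta>1 (x, y)"
  by (simp add: s1_def dbar_def)

lemma s2_flip_fst [simp]: "s2 \<Theta>2 (\<not> x, y) = - s2 \<Theta>2 (x, y)"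
  by (simp add: s2_def dbar_def)

lemma R1_plus_R2_eq_zero_iff:
  "(\<lambda>p. R1 f p + R2 f p) = (\<lambda>p. 0) \<longleftrightarrow> (\<forall>x y. f (\<not> x, y) = - f (x, \<not> y))"
  by (auto simp: fun_eq_iff add_eq_0_iff)

lemma spin_conn_apply [simp]:
  "spin_conn \<Theta>1 \<Theta>2 \<alpha> \<beta> C1 I1 = (\<lambda>p. - \<alpha> p - s1 \<Theta>1 p / 2)"
  "spin_conn \<Theta>1 \<Theta>2 \<alpha> \<beta> C1 I2 = (\<lambda>p. \<beta> p - s2 \<Theta>2 p / 2)"
  "spin_conn \<Theta>1 \<Theta>2 \<alpha> \<beta> C3 I1 = (\<lambda>p. \<beta> p - s1 \<Theta>1 p / 2)"
  "spin_conn \<Theta>1 \<Theta>2 \<alpha> \<beta> C3 I2 = (\<lambda>p. \<alpha> p - s2 \<Theta>2 p / 2)"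
  by (simp_all add: spin_conn_def fun_eq_iff)

lemma torsion_free_iff:
  "torsion_free \<Theta>1 \<Theta>2 A \<longleftrightarrow> (\<forall>p.
     s2 \<Theta>2 p + A C1 I1 p + A C1 I2 p - A C3 I1 p + A C3 I2 p = 0 \<and>
     - s1 \<Theta>1 p - A C1 I1 p + A C1 I2 p - A C3 I1 p - A C3 I2 p = 0)"
  by (simp add: torsion_free_def all_idx_eq fun_eq_iff de_def wedge_def act_def s1_def s2_def
      algebra_simps all_conj_distrib)

lemma torsion_free_iff_spin_conn:
  "torsion_free \<Theta>1 \<Theta>2 A \<longleftrightarrow> (\<exists>\<alpha> \<beta>. A = spin_conn \<Theta>1 \<Theta>2 \<alpha> \<beta>)"
proof
  assume "torsion_free \<Theta>1 \<Theta>2 A"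
  then have tf: "s2 \<Theta>2 p + A C1 I1 p + A C1 I2 p - A C3 I1 p + A C3 I2 p = 0"
    "- s1 \<Theta>1 p - A C1 I1 p + A C1 I2 p - A C3 I1 p - A C3 I2 p = 0" for p
    unfolding torsion_free_iff by blast+
  have "A i d p = spin_conn \<Theta>1 \<Theta>2
      (\<lambda>p. A C3 I2 p + s2 \<Theta>2 p / 2) (\<lambda>p. A C3 I1 p + s1 \<Theta>1 p / 2) i d p" for i d p
    using tf[of p] by (cases i; cases d) (simp_all add: field_simps)
  then show "\<exists>\<alpha> \<beta>. A = spin_conn \<Theta>1 \<Theta>2 \<alpha> \<beta>" by blast
qed (auto simp: torsion_free_iff)

lemma cotorsion_free_iff:
  "cotorsion_free \<Theta>1 \<Theta>2 A \<longleftrightarrow> (\<forall>p.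
     s2 \<Theta>2 p - R1 (A C1 I2) p + R2 (A C1 I1) p - R1 (A C3 I2) p - R2 (A C3 I1) p = 0 \<and>
     - s1 \<Theta>1 p + R1 (A C1 I2) p + R2 (A C1 I1) p - R1 (A C3 I2) p + R2 (A C3 I1) p = 0)"
  by (simp add: cotorsion_free_def all_idx_eq fun_eq_iff de_def wedge_def act_def s1_def s2_def
      algebra_simps all_conj_distrib)

lemma cotorsion_free_spin_conn_iff:
  "cotorsion_free \<Theta>1 \<Theta>2 (spin_conn \<Theta>1 \<Theta>2 \<alpha> \<beta>) \<longleftrightarrow>
     (\<lambda>p. R1 (\<lambda>q. \<alpha> q + \<beta> q) p + R2 (\<lambda>q. \<alpha> q + \<beta> q) p) = (\<lambda>p. 0) \<and>
     (\<lambda>p. R1 (\<lambda>q. \<beta> q - \<alpha> q) p + R2 (\<lambda>q. \<beta> q - \<alpha> q) p) = (\<lambda>p. 0)"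
proof -
  let ?A = "spin_conn \<Theta>1 \<Theta>2 \<alpha> \<beta>"
    and ?a = "\<lambda>q. \<alpha> q + \<beta> q" and ?b = "\<lambda>q. \<beta> q - \<alpha> q"
  have cotorsion_components:
    "s2 \<Theta>2 p - R1 (?A C1 I2) p + R2 (?A C1 I1) p - R1 (?A C3 I2) p - R2 (?A C3 I1) p
          = - (R1 ?a p + R2 ?a p)"
    "- s1 \<Theta>1 p + R1 (?A C1 I2) p + R2 (?A C1 I1) p - R1 (?A C3 I2) p + R2 (?A C3 I1) p
          = R1 ?b p + R2 ?b p" for p
    by (cases p; simp add: algebra_simps)+
  then show ?thesis
    unfolding cotorsion_free_iff fun_eq_iff
    by (simp only: cotorsion_components neg_equal_0_iff_equal all_conj_distrib)
qed

lemma torsion_cotorsion_free_iff: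
  "torsion_free \<Theta>1 \<Theta>2 A \<and> cotorsion_free \<Theta>1 \<Theta>2 A \<longleftrightarrow>
     (\<exists>\<alpha> \<beta>. (\<lambda>p. R1 (\<lambda>q. \<alpha> q + \<beta> q) p + R2 (\<lambda>q. \<alpha> q + \<beta> q) p) = (\<lambda>p. 0)
          \<and> (\<lambda>p. R1 (\<lambda>q. \<beta> q - \<alpha> q) p + R2 (\<lambda>q. \<beta> q - \<alpha> q) p) = (\<lambda>p. 0)
          \<and> A = spin_conn \<Theta>1 \<Theta>2 \<alpha> \<beta>)"
proof
  assume "torsion_free \<Theta>1 \<Theta>2 A \<and> cotorsion_free \<Theta>1 \<Theta>2 A"
  then obtain \<alpha> \<beta> where "A = spin_conn \<Theta>1 \<Theta>2 \<alpha> \<beta>"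
    and "cotorsion_free \<Theta>1 \<Theta>2 (spin_conn \<Theta>1 \<Theta>2 \<alpha> \<beta>)"
    by (auto simp: torsion_free_iff_spin_conn)
  then show "\<exists>\<alpha> \<beta>. (\<lambda>p. R1 (\<lambda>q. \<alpha> q + \<beta> q) p + R2 (\<lambda>q. \<alpha> q + \<beta> q) p) = (\<lambda>p. 0)
          \<and> (\<lambda>p. R1 (\<lambda>q. \<beta> q - \<alpha> q) p + R2 (\<lambda>q. \<beta> q - \<alpha> q) p) = (\<lambda>p. 0)
          \<and> A = spin_conn \<Theta>1 \<Theta>2 \<alpha> \<beta>"
    using cotorsion_free_spin_conn_iff by blast
qed (auto simp: torsion_free_iff_spin_conn cotorsion_free_spin_conn_iff)

lemma nabla_ebas:
  "nabla \<Theta>1 \<Theta>2 A (ebas c) = (\<lambda>b d p. - (A C1 b p * act C1 c d p + A C3 b p * act C3 c d p))"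
  by (cases c) (simp_all add: nabla_def tens_def dfun_def ebas_def fun_eq_iff)

lemma nabla_spin_conn_ebas1:
  "nabla \<Theta>1 \<Theta>2 (spin_conn \<Theta>1 \<Theta>2 \<alpha> \<beta>) (ebas I1) = (\<lambda>c d p. case (c, d) of
      (I1, I1) \<Rightarrow> \<beta> p - \<alpha> p - s1 \<Theta>1 p | (I1, I2) \<Rightarrow> \<alpha> p + \<beta> p
    | (I2, I1) \<Rightarrow> \<alpha> p + \<beta> p - s2 \<Theta>2 p | (I2, I2) \<Rightarrow> - (\<beta> p - \<alpha> p))"
  by (auto simp: nabla_ebas act_def fun_eq_iff split: idx.split)

lemma nabla_spin_conn_ebas2:
  "nabla \<Theta>1 \<Theta>2 (spin_conn \<Theta>1 \<Theta>2 \<alpha> \<beta>) (ebas I2) = (\<lambda>c d p. case (c, d) of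
      (I1, I1) \<Rightarrow> - (\<alpha> p + \<beta> p) | (I1, I2) \<Rightarrow> \<beta> p - \<alpha> p - s1 \<Theta>1 p
    | (I2, I1) \<Rightarrow> \<beta> p - \<alpha> p | (I2, I2) \<Rightarrow> \<alpha> p + \<beta> p - s2 \<Theta>2 p)"
  by (auto simp: nabla_ebas act_def fun_eq_iff split: idx.split)

lemma wedge_square_spin_conn:
  assumes \<alpha>: "\<And>x y. \<alpha> (\<not> x, y) = - \<alpha> (x, \<not> y)"
    and \<beta>: "\<And>x y. \<beta> (\<not> x, y) = - \<beta> (x, \<not> y)"
  shows "wedge (spin_conn \<Theta>1 \<Theta>2 \<alpha> \<beta> C1) (spin_conn \<Theta>1 \<Theta>2 \<alpha> \<beta> C1) p
       + wedge (spin_conn \<Theta>1 \<Theta>2 \<alpha> \<beta> C3) (spin_conn \<Theta>1 \<Theta>2 \<alpha> \<beta> C3) p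
     = (s1 \<Theta>1 p * dbar I2 (\<lambda>q. \<alpha> q + \<beta> q) p - s2 \<Theta>2 p * dbar I1 (\<lambda>q. \<beta> q - \<alpha> q) p) / 2"
  by (cases p) (simp add: wedge_def dbar_def \<alpha> \<beta> field_simps)

lemma regular_spin_conn_iff:
  assumes "(\<lambda>p. R1 (\<lambda>q. \<alpha> q + \<beta> q) p + R2 (\<lambda>q. \<alpha> q + \<beta> q) p) = (\<lambda>p. 0)"
    and "(\<lambda>p. R1 (\<lambda>q. \<beta> q - \<alpha> q) p + R2 (\<lambda>q. \<beta> q - \<alpha> q) p) = (\<lambda>p. 0)"
  shows "regular (spin_conn \<Theta>1 \<Theta>2 \<alpha> \<beta>) \<longleftrightarrow>
    (\<lambda>p. s1 \<Theta>1 p * dbar I2 (\<lambda>q. \<alpha> q + \<beta> q) p - s2 \<Theta>2 p * dbar I1 (\<lambda>q. \<beta> q - \<alpha> q) p) = (\<lambda>p. 0)"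
proof -
  have ab: "\<alpha> (\<not> x, y) + \<beta> (\<not> x, y) = - (\<alpha> (x, \<not> y) + \<beta> (x, \<not> y))"
    "\<beta> (\<not> x, y) - \<alpha> (\<not> x, y) = - (\<beta> (x, \<not> y) - \<alpha> (x, \<not> y))" for x y
    using assms unfolding R1_plus_R2_eq_zero_iff by blast+
  have "\<alpha> (\<not> x, y) = - \<alpha> (x, \<not> y)" "\<beta> (\<not> x, y) = - \<beta> (x, \<not> y)" for x y
    using ab[of x y] by linarith+
  then show ?thesis
    by (simp add: regular_def fun_eq_iff wedge_square_spin_conn del: split_paired_All)
qed

theorem proposition4p5:
  fixes \<Theta>1 \<Theta>2 :: "pt \<Rightarrow> real"
  assumes nz1: "\<forall>p. \<Theta>1 p \<noteq> 0"
    and nz2: "\<forall>p. \<Theta>2 p \<noteq> 0"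
    and compat: "\<forall>p. \<Theta>1 p * R1 \<Theta>2 p = \<Theta>2 p * R2 \<Theta>1 p"
  shows "(\<forall>A. (torsion_free \<Theta>1 \<Theta>2 A \<and> cotorsion_free \<Theta>1 \<Theta>2 A) \<longleftrightarrow>
            (\<exists>\<alpha> \<beta>. (\<lambda>p. R1 (\<lambda>q. \<alpha> q + \<beta> q) p + R2 (\<lambda>q. \<alpha> q + \<beta> q) p) = (\<lambda>p. 0)
                 \<and> (\<lambda>p. R1 (\<lambda>q. \<beta> q - \<alpha> q) p + R2 (\<lambda>q. \<beta> q - \<alpha> q) p) = (\<lambda>p. 0)
                 \<and> A = spin_conn \<Theta>1 \<Theta>2 \<alpha> \<beta>))
       \<and> (\<forall>\<alpha> \<beta>. let a = (\<lambda>q. \<alpha> q + \<beta> q); b = (\<lambda>q. \<beta> q - \<alpha> q);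
                    A = spin_conn \<Theta>1 \<Theta>2 \<alpha> \<beta> in
            (\<lambda>p. R1 a p + R2 a p) = (\<lambda>p. 0) \<and> (\<lambda>p. R1 b p + R2 b p) = (\<lambda>p. 0) \<longrightarrow>
              nabla \<Theta>1 \<Theta>2 A (ebas I1) =
                (\<lambda>c d p. case (c, d) of
                    (I1, I1) \<Rightarrow> b p - s1 \<Theta>1 p | (I1, I2) \<Rightarrow> a p
                  | (I2, I1) \<Rightarrow> a p - s2 \<Theta>2 p | (I2, I2) \<Rightarrow> - b p)
            \<and> nabla \<Theta>1 \<Theta>2 A (ebas I2) =
                (\<lambda>c d p. case (c, d) of
                    (I1, I1) \<Rightarrow> - a p | (I1, I2) \<Rightarrow> b p - s1 \<Theta>1 p
                  | (I2, I1) \<Rightarrow> b p | (I2, I2) \<Rightarrow> a p - s2 \<Theta>2 p)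
            \<and> (regular A \<longleftrightarrow>
                 (\<lambda>p. s1 \<Theta>1 p * dbar I2 a p - s2 \<Theta>2 p * dbar I1 b p) = (\<lambda>p. 0)))"
  by (simp add: Let_def torsion_cotorsion_free_iff nabla_spin_conn_ebas1 nabla_spin_conn_ebas2
      regular_spin_conn_iff)

end
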